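(* Let $L$ be a Stonean locale. Restriction along the inclusion of posets $\mathrm{COpen}(L)\to L$ is a bijection from the set of normal valuations on $L$ to the set of continuous valuations on the complete Boolean algebra $\mathrm{COpen}(L)$ of compact opens of $L$; the inverse is given by precomposition with the frame homomorphism $\neg\neg:L\to\mathrm{COpen}(L)$.
   Context: A frame is a poset with finite meets and arbitrary joins, binary meets distributing over arbitrary joins; a locale is a frame viewed in the opposite category. $\neg x=\sup\{w:w\wedge x=0\}$. $a\in L$ is a compact open if $\bigvee S\ge a$ implies $\bigvee F\ge a$ for some finite $F\subset S$. $L$ is coherent if compact opens are closed under finite meets (including $1$) and every element is a join of compact opens; regular if $y=\bigvee\{x:\neg x\vee y=1\}$ for all $y$; extremally disconnected if $\neg x\vee\neg\neg x=1$ for all $x$. A Stonean locale is a coherent, regular, extremally disconnected locale (its compact opens are exactly the elements with $a=\neg\neg a$ and form a complete Boolean algebra). A continuous valuation on a lattice is $\nu$ to $[0,\infty)$ with $\nu(0)=0$, $\nu(x)+\nu(y)=\nu(x\vee y)+\nu(x\wedge y)$, monotone, preserving suprema of directed subsets (suprema computed in the lattice in question); a normal valuation on $L$ is a continuous valuation with $\nu(\neg\neg a)=\nu(a)$ for all $a$. *)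

theory Defs
  imports Main "HOL.Real"
begin

text \<open>A frame: a complete lattice in which binary meets distribute over arbitrary joins.
  The locale L is represented by its frame of opens, a type 'a of class complete_lattice.\<close>

definition is_frame :: "'a::complete_lattice itself \<Rightarrow> bool" where
  "is_frame _ \<longleftrightarrow> (\<forall>(x::'a) S. inf x (Sup S) = Sup ((\<lambda>s. inf x s) ` S))"

definition neg :: "'a::complete_lattice \<Rightarrow> 'a" where
  "neg x = Sup {w. inf w x = bot}"

definition compact_open :: "'a::complete_lattice \<Rightarrow> bool" where
  "compact_open a \<longleftrightarrow> (\<forall>S. a \<le> Sup S \<longrightarrow> (\<exists>F. F \<subseteq> S \<and> finite F \<and> a \<le> Sup F))"

definition COpen :: "'a::complete_lattice set" where
  "COpen = {a. compact_open a}"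

definition coherent :: "'a::complete_lattice itself \<Rightarrow> bool" where
  "coherent _ \<longleftrightarrow>
     compact_open (top::'a) \<and>
     (\<forall>a b::'a. compact_open a \<and> compact_open b \<longrightarrow> compact_open (inf a b)) \<and>
     (\<forall>y::'a. \<exists>S. (\<forall>s\<in>S. compact_open s) \<and> y = Sup S)"

definition regular :: "'a::complete_lattice itself \<Rightarrow> bool" where
  "regular _ \<longleftrightarrow> (\<forall>y::'a. y = Sup {x. sup (neg x) y = top})"

definition extremally_disconnected :: "'a::complete_lattice itself \<Rightarrow> bool" where
  "extremally_disconnected _ \<longleftrightarrow> (\<forall>x::'a. sup (neg x) (neg (neg x)) = top)"

definition stonean :: "'a::complete_lattice itself \<Rightarrow> bool" where
  "stonean T \<longleftrightarrow> is_frame T \<and> coherent T \<and> regular T \<and> extremally_disconnected T"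

definition is_lub_in :: "'a::complete_lattice set \<Rightarrow> 'a set \<Rightarrow> 'a \<Rightarrow> bool" where
  "is_lub_in P S x \<longleftrightarrow> x \<in> P \<and> (\<forall>s\<in>S. s \<le> x) \<and> (\<forall>y\<in>P. (\<forall>s\<in>S. s \<le> y) \<longrightarrow> x \<le> y)"

definition is_glb_in :: "'a::complete_lattice set \<Rightarrow> 'a set \<Rightarrow> 'a \<Rightarrow> bool" where
  "is_glb_in P S x \<longleftrightarrow> x \<in> P \<and> (\<forall>s\<in>S. x \<le> s) \<and> (\<forall>y\<in>P. (\<forall>s\<in>S. y \<le> s) \<longrightarrow> y \<le> x)"

definition directed_set :: "'a::complete_lattice set \<Rightarrow> bool" where
  "directed_set D \<longleftrightarrow> D \<noteq> {} \<and> (\<forall>x\<in>D. \<forall>y\<in>D. \<exists>z\<in>D. x \<le> z \<and> y \<le> z)"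

text \<open>A continuous valuation on the lattice P (a subposet of 'a which is a lattice),
  with lattice operations and directed suprema computed in P. Only the values on P matter.\<close>

definition continuous_valuation_on :: "'a::complete_lattice set \<Rightarrow> ('a \<Rightarrow> real) \<Rightarrow> bool" where
  "continuous_valuation_on P \<nu> \<longleftrightarrow>
     (\<forall>x\<in>P. 0 \<le> \<nu> x) \<and>
     (\<forall>z. is_lub_in P {} z \<longrightarrow> \<nu> z = 0) \<and>
     (\<forall>x\<in>P. \<forall>y\<in>P. \<forall>j m. is_lub_in P {x, y} j \<and> is_glb_in P {x, y} m
         \<longrightarrow> \<nu> x + \<nu> y = \<nu> j + \<nu> m) \<and>
     (\<forall>x\<in>P. \<forall>y\<in>P. x \<le> y \<longrightarrow> \<nu> x \<le> \<nu> y) \<and>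
     (\<forall>D s. D \<subseteq> P \<and> directed_set D \<and> is_lub_in P D s \<longrightarrow> \<nu> s = (SUP d\<in>D. \<nu> d))"

definition normal_valuation :: "('a::complete_lattice \<Rightarrow> real) \<Rightarrow> bool" where
  "normal_valuation \<nu> \<longleftrightarrow> continuous_valuation_on UNIV \<nu> \<and> (\<forall>a. \<nu> (neg (neg a)) = \<nu> a)"

text \<open>Valuations on COpen(L) are represented extensionally: functions vanishing off COpen(L).\<close>

definition restrict_COpen :: "('a::complete_lattice \<Rightarrow> real) \<Rightarrow> 'a \<Rightarrow> real" where
  "restrict_COpen \<nu> = (\<lambda>x. if x \<in> COpen then \<nu> x else 0)"

definition COpen_valuations :: "('a::complete_lattice \<Rightarrow> real) set" where
  "COpen_valuations = {\<mu>. continuous_valuation_on COpen \<mu> \<and> (\<forall>x. x \<notin> COpen \<longrightarrow> \<mu> x = 0)}"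

end

(*
  In a Stonean locale the compact opens are exactly the elements with neg (neg a) = a:
  a complemented element of a compact frame is compact, and for a compact c regularity
  yields finitely many x with sup (neg x) c = top, whence sup (neg c) c = top.  Double
  negation always preserves finite meets, extremal disconnectedness makes it preserve binary
  joins, and the join of D computed in COpen is neg (neg (Sup D)).  So a continuous
  valuation mu on COpen extends to the normal valuation mu o neg o neg, and a normal
  valuation nu equals nu o neg o neg, hence is determined by its restriction to COpen.
*)
theory Submission
  imports Defs
begin

lemma compact_open_bot: "compact_open (bot::'a::complete_lattice)"
  unfolding compact_open_def by (auto intro: exI[of _ "{}"])

context
  assumes frame: "is_frame TYPE('a::complete_lattice)"
begin

lemma frame_inf_Sup: "inf (x::'a) (Sup S) = Sup ((\<lambda>s. inf x s) ` S)"
  using frame unfolding is_frame_def by blast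

lemma frame_inf_sup: "inf (x::'a) (sup a b) = sup (inf x a) (inf x b)"
  using frame_inf_Sup[of x "{a, b}"] by simp

lemma frame_sup_inf: "sup (x::'a) (inf a b) = inf (sup x a) (sup x b)"
proof -
  have "inf (sup x a) (sup x b) = sup (inf (sup x a) x) (inf b (sup x a))"
    by (simp add: frame_inf_sup inf_commute)
  also have "\<dots> = sup x (sup (inf b x) (inf b a))"
    by (simp add: frame_inf_sup inf.absorb2)
  also have "\<dots> = sup x (inf a b)"
    by (metis inf.commute inf_le2 sup.absorb_iff2 sup.assoc sup.commute)
  finally show ?thesis ..
qed

lemma le_neg_iff: "(w::'a) \<le> neg x \<longleftrightarrow> inf w x = bot"
proof
  assume "w \<le> neg x"
  then have "inf w x \<le> inf x (neg x)" by (simp add: le_infI1 inf_commute)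
  also have "inf x (neg x) = Sup ((\<lambda>s. inf x s) ` {w. inf w x = bot})"
    unfolding neg_def by (rule frame_inf_Sup)
  also have "\<dots> = bot" by (auto simp: inf_commute intro!: Sup_eqI)
  finally show "inf w x = bot" by (simp add: bot_unique)
next
  assume "inf w x = bot"
  then show "w \<le> neg x" unfolding neg_def by (simp add: Sup_upper)
qed

lemma neg_inf_self: "inf (neg (x::'a)) x = bot"
  using le_neg_iff by blast

lemma inf_neg_self: "inf (x::'a) (neg x) = bot"
  using neg_inf_self by (simp add: inf_commute)

lemma neg_antimono:
  assumes "(x::'a) \<le> y"
  shows "neg y \<le> neg x"
proof -
  have "inf (neg y) x \<le> inf (neg y) y" using assms by (simp add: le_infI2)
  then show ?thesis by (simp add: le_neg_iff neg_inf_self bot_unique)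
qed

lemma le_neg_neg: "(x::'a) \<le> neg (neg x)"
  using le_neg_iff inf_neg_self by blast

lemma neg_neg_neg: "neg (neg (neg (x::'a))) = neg x"
  by (simp add: antisym le_neg_neg neg_antimono)

lemma neg_neg_mono: "(x::'a) \<le> y \<Longrightarrow> neg (neg x) \<le> neg (neg y)"
  by (intro neg_antimono)

lemma neg_bot: "neg (bot::'a) = top"
  using le_neg_iff[of top bot] by (simp add: top_unique)

lemma neg_neg_bot: "neg (neg (bot::'a)) = bot"
  using neg_inf_self[of top] by (simp add: neg_bot)

lemma neg_sup: "neg (sup (x::'a) y) = inf (neg x) (neg y)"
proof -
  have "w \<le> neg (sup x y) \<longleftrightarrow> w \<le> inf (neg x) (neg y)" for w
    by (simp add: le_neg_iff frame_inf_sup)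
  then show ?thesis by (blast intro: antisym)
qed

lemma neg_neg_inf: "neg (neg (inf (a::'a) b)) = inf (neg (neg a)) (neg (neg b))"
proof (rule antisym)
  show "neg (neg (inf a b)) \<le> inf (neg (neg a)) (neg (neg b))"
    by (simp add: neg_neg_mono)
  define c where "c = neg (inf a b)"
  have "inf (inf c a) b = bot"
    unfolding c_def using neg_inf_self[of "inf a b"] by (simp add: inf_assoc)
  then have "inf c a \<le> neg (neg (neg b))" by (simp add: le_neg_iff neg_neg_neg)
  then have "inf (inf c (neg (neg b))) a = bot"
    by (simp add: le_neg_iff inf_aci)
  then have "inf c (neg (neg b)) \<le> neg (neg (neg a))" by (simp add: le_neg_iff neg_neg_neg)
  then have "inf (inf (neg (neg a)) (neg (neg b))) c = bot"
    by (simp add: le_neg_iff inf_aci)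
  then show "inf (neg (neg a)) (neg (neg b)) \<le> neg (neg (inf a b))"
    unfolding c_def by (simp add: le_neg_iff)
qed

lemma neg_neg_Sup_neg_neg_image:
  "neg (neg (Sup ((\<lambda>d. neg (neg d)) ` D))) = neg (neg (Sup (D::'a set)))"
proof (rule antisym)
  have "Sup ((\<lambda>d. neg (neg d)) ` D) \<le> neg (neg (Sup D))"
    by (auto intro!: SUP_least neg_neg_mono Sup_upper)
  then show "neg (neg (Sup ((\<lambda>d. neg (neg d)) ` D))) \<le> neg (neg (Sup D))"
    using neg_neg_mono neg_neg_neg by metis
  have "Sup D \<le> Sup ((\<lambda>d. neg (neg d)) ` D)"
    by (auto intro!: Sup_least SUP_upper2 le_neg_neg)
  then show "neg (neg (Sup D)) \<le> neg (neg (Sup ((\<lambda>d. neg (neg d)) ` D)))"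
    by (rule neg_neg_mono)
qed

lemma neg_neg_le_if_sup_neg_eq_top:
  assumes "sup (neg (x::'a)) y = top"
  shows "neg (neg x) \<le> y"
proof -
  have "neg (neg x) = inf (neg (neg x)) (sup (neg x) y)" using assms by simp
  also have "\<dots> = inf (neg (neg x)) y" by (simp add: frame_inf_sup neg_inf_self)
  finally show ?thesis by (metis inf.cobounded2)
qed

lemma sup_neg_Sup_eq_top:
  assumes "finite G" "\<And>x. x \<in> G \<Longrightarrow> sup (neg x) c = top"
  shows "sup (neg (Sup G)) (c::'a) = top"
  using assms
proof (induction G rule: finite_induct)
  case empty
  then show ?case by (simp add: neg_bot)
next
  case (insert x G)
  then show ?case by (simp add: neg_sup sup_commute[of _ c] frame_sup_inf)
qed

lemma compact_open_if_complemented: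
  assumes "compact_open (top::'a)" and "sup (neg b) (b::'a) = top"
  shows "compact_open b"
  unfolding compact_open_def
proof (intro allI impI)
  fix S assume "b \<le> Sup S"
  have "top = sup (neg b) b" using assms(2) by simp
  also have "\<dots> \<le> Sup (insert (neg b) S)" using \<open>b \<le> Sup S\<close> by (simp add: le_supI2)
  finally have "top \<le> Sup (insert (neg b) S)" .
  then obtain G where G: "G \<subseteq> insert (neg b) S" "finite G" "top \<le> Sup G"
    using assms(1) unfolding compact_open_def by blast
  define H where "H = G - {neg b}"
  have "G \<subseteq> insert (neg b) H" unfolding H_def by blast
  then have "Sup G \<le> Sup (insert (neg b) H)" by (rule Sup_subset_mono)
  then have "Sup G \<le> sup (neg b) (Sup H)" by simp
  then have "sup (neg b) (Sup H) = top" using G(3) by (simp add: top_unique)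
  then have "b \<le> Sup H"
    using le_neg_neg[of b] neg_neg_le_if_sup_neg_eq_top order_trans by blast
  moreover have "H \<subseteq> S" "finite H" using G unfolding H_def by auto
  ultimately show "\<exists>F. F \<subseteq> S \<and> finite F \<and> b \<le> Sup F" by blast
qed

lemma neg_neg_eq_if_compact_open:
  assumes "regular TYPE('a)" and "compact_open (c::'a)"
  shows "neg (neg c) = c"
proof -
  define X where "X = {x::'a. sup (neg x) c = top}"
  have "c = Sup X" using assms(1) unfolding regular_def X_def by blast
  then obtain G where G: "G \<subseteq> X" "finite G" "c \<le> Sup G"
    using assms(2) unfolding compact_open_def by (metis order_refl)
  have "sup (neg (Sup G)) c = top"
    using G(1,2) by (intro sup_neg_Sup_eq_top) (auto simp: X_def)
  moreover have "neg (Sup G) \<le> neg c" using G(3) by (rule neg_antimono)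
  ultimately have "sup (neg c) c = top" by (metis sup.mono order_refl top_unique)
  then show ?thesis by (simp add: antisym le_neg_neg neg_neg_le_if_sup_neg_eq_top)
qed

end

context
  assumes frame: "is_frame TYPE('a::complete_lattice)"
    and extremally_disconnected: "extremally_disconnected TYPE('a)"
begin

lemma sup_neg_neg_neg: "sup (neg (x::'a)) (neg (neg x)) = top"
  using extremally_disconnected unfolding extremally_disconnected_def by blast

lemma neg_inf: "neg (inf (x::'a) y) = sup (neg x) (neg y)"
proof (rule antisym)
  define w where "w = neg (inf x y)"
  have "inf (inf w y) x = bot"
    unfolding w_def using neg_inf_self[OF frame, of "inf x y"] by (simp add: inf_aci)
  then have "inf w y \<le> neg x" by (simp add: frame le_neg_iff)
  then have "inf (inf w y) (neg (neg x)) \<le> inf (neg x) (neg (neg x))"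
    by (rule inf_mono) simp
  then have "inf (inf w (neg (neg x))) y = bot"
    by (simp add: frame inf_neg_self bot_unique inf_aci)
  then have "inf w (neg (neg x)) \<le> neg y" by (simp add: frame le_neg_iff)
  have "w = inf w (sup (neg x) (neg (neg x)))" by (simp add: sup_neg_neg_neg)
  also have "\<dots> = sup (inf w (neg x)) (inf w (neg (neg x)))" by (rule frame_inf_sup[OF frame])
  also have "\<dots> \<le> sup (neg x) (neg y)"
    using \<open>inf w (neg (neg x)) \<le> neg y\<close> by (simp add: le_supI1 le_supI2)
  finally show "neg (inf x y) \<le> sup (neg x) (neg y)" unfolding w_def .
  show "sup (neg x) (neg y) \<le> neg (inf x y)"
    by (simp add: frame neg_antimono)
qed

lemma neg_neg_sup: "neg (neg (sup (x::'a) y)) = sup (neg (neg x)) (neg (neg y))"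
  by (simp add: frame neg_sup neg_inf)

end

lemma is_lub_in_unique: "is_lub_in P S x \<Longrightarrow> is_lub_in P S y \<Longrightarrow> x = y"
  unfolding is_lub_in_def by (meson antisym)

lemma is_glb_in_inf_iff:
  "inf x y \<in> P \<Longrightarrow> is_glb_in P {x, y} m \<longleftrightarrow> m = inf x y"
  unfolding is_glb_in_def by (auto intro: antisym)

lemma continuous_valuation_on_iff:
  fixes P :: "'a::complete_lattice set" and lub :: "'a set \<Rightarrow> 'a"
  assumes lub: "\<And>D. D \<subseteq> P \<Longrightarrow> is_lub_in P D (lub D)"
    and inf_closed: "\<And>x y. x \<in> P \<Longrightarrow> y \<in> P \<Longrightarrow> inf x y \<in> P"
  shows "continuous_valuation_on P \<nu> \<longleftrightarrow>
    (\<forall>x\<in>P. 0 \<le> \<nu> x) \<and> \<nu> (lub {}) = 0 \<and>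
    (\<forall>x\<in>P. \<forall>y\<in>P. \<nu> x + \<nu> y = \<nu> (lub {x, y}) + \<nu> (inf x y)) \<and>
    (\<forall>x\<in>P. \<forall>y\<in>P. x \<le> y \<longrightarrow> \<nu> x \<le> \<nu> y) \<and>
    (\<forall>D\<subseteq>P. directed_set D \<longrightarrow> \<nu> (lub D) = (SUP d\<in>D. \<nu> d))"
proof -
  have lub_iff: "is_lub_in P D s \<longleftrightarrow> s = lub D" if "D \<subseteq> P" for D s
    using lub[OF that] is_lub_in_unique by blast
  show ?thesis
    unfolding continuous_valuation_on_def
    by (auto simp: lub_iff is_glb_in_inf_iff inf_closed)
qed

lemma continuous_valuation_on_UNIV_iff:
  "continuous_valuation_on UNIV (\<nu>::'a::complete_lattice \<Rightarrow> real) \<longleftrightarrow>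
    (\<forall>x. 0 \<le> \<nu> x) \<and> \<nu> bot = 0 \<and>
    (\<forall>x y. \<nu> x + \<nu> y = \<nu> (sup x y) + \<nu> (inf x y)) \<and>
    (\<forall>x y. x \<le> y \<longrightarrow> \<nu> x \<le> \<nu> y) \<and>
    (\<forall>D. directed_set D \<longrightarrow> \<nu> (Sup D) = (SUP d\<in>D. \<nu> d))"
  by (subst continuous_valuation_on_iff[where lub = Sup])
    (auto simp: is_lub_in_def intro: Sup_upper Sup_least)

lemma directed_set_image_mono:
  assumes "directed_set D" and "mono f"
  shows "directed_set (f ` D)"
  unfolding directed_set_def
proof (intro conjI ballI)
  show "f ` D \<noteq> {}" using assms(1) by (simp add: directed_set_def)
  fix u v assume "u \<in> f ` D" "v \<in> f ` D"
  then obtain x y where xy: "x \<in> D" "y \<in> D" "u = f x" "v = f y" by blast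
  then obtain z where "z \<in> D" "x \<le> z" "y \<le> z"
    using assms(1) unfolding directed_set_def by blast
  then show "\<exists>w\<in>f ` D. u \<le> w \<and> v \<le> w"
    using xy(3,4) assms(2) by (auto simp: mono_def)
qed

lemma stoneanD:
  assumes "stonean TYPE('a::complete_lattice)"
  shows "is_frame TYPE('a)" "extremally_disconnected TYPE('a)" "regular TYPE('a)"
    "compact_open (top::'a)"
  using assms unfolding stonean_def coherent_def by auto

context
  assumes stonean: "stonean TYPE('a::complete_lattice)"
begin

lemmas stonean_frame = stoneanD(1)[OF stonean]
  and stonean_extremally_disconnected = stoneanD(2)[OF stonean]
  and stonean_regular = stoneanD(3)[OF stonean]
  and stonean_compact_top = stoneanD(4)[OF stonean]

lemma neg_neg_in_COpen: "neg (neg (a::'a)) \<in> COpen"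
proof -
  have "sup (neg (neg (neg a))) (neg (neg a)) = top"
    using sup_neg_neg_neg[OF stonean_frame stonean_extremally_disconnected, of a]
    by (simp add: neg_neg_neg[OF stonean_frame] sup_commute)
  then show ?thesis
    unfolding COpen_def using compact_open_if_complemented[OF stonean_frame stonean_compact_top]
    by blast
qed

lemma COpen_iff_neg_neg_eq: "(a::'a) \<in> COpen \<longleftrightarrow> neg (neg a) = a"
  using neg_neg_eq_if_compact_open[OF stonean_frame stonean_regular] neg_neg_in_COpen
  unfolding COpen_def by (metis mem_Collect_eq)

lemma sup_in_COpen: "(x::'a) \<in> COpen \<Longrightarrow> y \<in> COpen \<Longrightarrow> sup x y \<in> COpen"
  by (simp add: COpen_iff_neg_neg_eq neg_neg_sup[OF stonean_frame stonean_extremally_disconnected])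

lemma inf_in_COpen: "(x::'a) \<in> COpen \<Longrightarrow> y \<in> COpen \<Longrightarrow> inf x y \<in> COpen"
  by (simp add: COpen_iff_neg_neg_eq neg_neg_inf[OF stonean_frame])

lemma is_lub_in_COpen: "is_lub_in COpen (D::'a set) (neg (neg (Sup D)))"
  unfolding is_lub_in_def
  by (metis COpen_iff_neg_neg_eq Sup_least Sup_upper le_neg_neg[OF stonean_frame]
      neg_neg_in_COpen neg_neg_mono[OF stonean_frame] order_trans)

lemma neg_neg_sup_COpen:
  "(x::'a) \<in> COpen \<Longrightarrow> y \<in> COpen \<Longrightarrow> neg (neg (sup x y)) = sup x y"
  using sup_in_COpen COpen_iff_neg_neg_eq by blast

lemma continuous_valuation_on_COpen_iff:
  "continuous_valuation_on COpen (\<mu>::'a \<Rightarrow> real) \<longleftrightarrow>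
    (\<forall>x\<in>COpen. 0 \<le> \<mu> x) \<and> \<mu> bot = 0 \<and>
    (\<forall>x\<in>COpen. \<forall>y\<in>COpen. \<mu> x + \<mu> y = \<mu> (sup x y) + \<mu> (inf x y)) \<and>
    (\<forall>x\<in>COpen. \<forall>y\<in>COpen. x \<le> y \<longrightarrow> \<mu> x \<le> \<mu> y) \<and>
    (\<forall>D\<subseteq>COpen. directed_set D \<longrightarrow> \<mu> (neg (neg (Sup D))) = (SUP d\<in>D. \<mu> d))"
  by (subst continuous_valuation_on_iff[where lub = "\<lambda>D. neg (neg (Sup D))"])
    (auto simp: is_lub_in_COpen inf_in_COpen neg_neg_bot[OF stonean_frame] neg_neg_sup_COpen)

lemma restrict_COpen_in_COpen_valuations:
  assumes "normal_valuation (\<nu>::'a \<Rightarrow> real)"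
  shows "restrict_COpen \<nu> \<in> COpen_valuations"
proof -
  have nonneg: "\<And>x. 0 \<le> \<nu> x" and nu_bot: "\<nu> bot = 0"
    and modular: "\<And>x y. \<nu> x + \<nu> y = \<nu> (sup x y) + \<nu> (inf x y)"
    and nu_mono: "\<And>x y. x \<le> y \<Longrightarrow> \<nu> x \<le> \<nu> y"
    and directed: "\<And>D. directed_set D \<Longrightarrow> \<nu> (Sup D) = (SUP d\<in>D. \<nu> d)"
    and normal: "\<And>a. \<nu> (neg (neg a)) = \<nu> a"
    using assms unfolding normal_valuation_def continuous_valuation_on_UNIV_iff by simp_all
  have restrict: "\<And>x. x \<in> COpen \<Longrightarrow> restrict_COpen \<nu> x = \<nu> x"
    unfolding restrict_COpen_def by simp
  have "restrict_COpen \<nu> (neg (neg (Sup D))) = (SUP d\<in>D. restrict_COpen \<nu> d)"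
    if "D \<subseteq> COpen" "directed_set D" for D
  proof -
    have "restrict_COpen \<nu> (neg (neg (Sup D))) = \<nu> (Sup D)"
      by (simp add: restrict neg_neg_in_COpen normal)
    also have "\<dots> = (SUP d\<in>D. \<nu> d)" using that(2) by (rule directed)
    also have "\<dots> = (SUP d\<in>D. restrict_COpen \<nu> d)"
      using that(1) restrict by (intro SUP_cong) auto
    finally show ?thesis .
  qed
  moreover have "restrict_COpen \<nu> bot = 0"
    using compact_open_bot nu_bot unfolding restrict_COpen_def by simp
  ultimately have "continuous_valuation_on COpen (restrict_COpen \<nu>)"
    unfolding continuous_valuation_on_COpen_iff
    \<comment> \<open>modularity read from left to right would make the simplifier loop\<close>
    by (simp add: restrict nonneg nu_mono sup_in_COpen inf_in_COpen modular[symmetric])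
  then show ?thesis unfolding COpen_valuations_def restrict_COpen_def by simp
qed

lemma normal_valuation_comp_neg_neg:
  assumes "\<mu> \<in> COpen_valuations"
  shows "normal_valuation (\<lambda>a::'a. \<mu> (neg (neg a)))"
proof -
  note frame = stonean_frame and ed = stonean_extremally_disconnected
  have nonneg: "\<And>x. x \<in> COpen \<Longrightarrow> 0 \<le> \<mu> x" and mu_bot: "\<mu> bot = 0"
    and modular: "\<And>x y. x \<in> COpen \<Longrightarrow> y \<in> COpen \<Longrightarrow>
      \<mu> x + \<mu> y = \<mu> (sup x y) + \<mu> (inf x y)"
    and mu_mono: "\<And>x y. x \<in> COpen \<Longrightarrow> y \<in> COpen \<Longrightarrow> x \<le> y \<Longrightarrow> \<mu> x \<le> \<mu> y"
    and directed: "\<And>D. D \<subseteq> COpen \<Longrightarrow> directed_set D \<Longrightarrow>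
      \<mu> (neg (neg (Sup D))) = (SUP d\<in>D. \<mu> d)"
    using assms unfolding COpen_valuations_def continuous_valuation_on_COpen_iff by auto
  have "\<mu> (neg (neg (Sup D))) = (SUP d\<in>D. \<mu> (neg (neg d)))"
    if "directed_set D" for D :: "'a set"
  proof -
    have "directed_set ((\<lambda>d. neg (neg d)) ` D)"
      using that by (rule directed_set_image_mono) (simp add: mono_def neg_neg_mono[OF frame])
    then have "\<mu> (neg (neg (Sup ((\<lambda>d. neg (neg d)) ` D)))) = (SUP d\<in>D. \<mu> (neg (neg d)))"
      by (subst directed) (auto simp: neg_neg_in_COpen image_image)
    then show ?thesis by (simp add: neg_neg_Sup_neg_neg_image[OF frame])
  qed
  then show ?thesis
    unfolding normal_valuation_def continuous_valuation_on_UNIV_iff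
    by (simp add: nonneg neg_neg_in_COpen neg_neg_bot[OF frame] mu_bot neg_neg_neg[OF frame]
        neg_neg_sup[OF frame ed] neg_neg_inf[OF frame] modular[symmetric] mu_mono
        neg_neg_mono[OF frame])
qed

lemma restrict_COpen_comp_neg_neg:
  assumes "\<mu> \<in> COpen_valuations"
  shows "restrict_COpen (\<lambda>a::'a. \<mu> (neg (neg a))) = \<mu>"
  using assms COpen_iff_neg_neg_eq unfolding restrict_COpen_def COpen_valuations_def by auto

lemma comp_neg_neg_restrict_COpen:
  assumes "normal_valuation (\<nu>::'a \<Rightarrow> real)"
  shows "(\<lambda>a. restrict_COpen \<nu> (neg (neg a))) = \<nu>"
  using assms neg_neg_in_COpen unfolding restrict_COpen_def normal_valuation_def by simp

end

theorem mainTheorem16: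
  assumes "stonean TYPE('a::complete_lattice)"
  shows "bij_betw restrict_COpen {\<nu>::'a \<Rightarrow> real. normal_valuation \<nu>} COpen_valuations
       \<and> (\<forall>a::'a. neg (neg a) \<in> COpen)
       \<and> (\<forall>\<mu>\<in>COpen_valuations. normal_valuation (\<lambda>a::'a. \<mu> (neg (neg a)))
              \<and> restrict_COpen (\<lambda>a::'a. \<mu> (neg (neg a))) = \<mu>)"
proof -
  have "bij_betw restrict_COpen {\<nu>::'a \<Rightarrow> real. normal_valuation \<nu>} COpen_valuations"
  proof (rule bij_betw_byWitness[where f' = "\<lambda>\<mu> a. \<mu> (neg (neg a))"])
    show "\<forall>\<nu>\<in>{\<nu>. normal_valuation \<nu>}. (\<lambda>a::'a. restrict_COpen \<nu> (neg (neg a))) = \<nu>"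
      using comp_neg_neg_restrict_COpen[OF assms] by blast
    show "\<forall>\<mu>\<in>COpen_valuations. restrict_COpen (\<lambda>a::'a. \<mu> (neg (neg a))) = \<mu>"
      using restrict_COpen_comp_neg_neg[OF assms] by blast
    show "restrict_COpen ` {\<nu>::'a \<Rightarrow> real. normal_valuation \<nu>} \<subseteq> COpen_valuations"
      using restrict_COpen_in_COpen_valuations[OF assms] by blast
    show "(\<lambda>\<mu> a::'a. \<mu> (neg (neg a))) ` COpen_valuations \<subseteq> {\<nu>. normal_valuation \<nu>}"
      using normal_valuation_comp_neg_neg[OF assms] by blast
  qed
  then show ?thesis
    using neg_neg_in_COpen[OF assms] normal_valuation_comp_neg_neg[OF assms]
      restrict_COpen_comp_neg_neg[OF assms]
    by blast
qed

end
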